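(* Let $C_t\subseteq\mathbb{R}^d$ be closed convex sets and $\ell_t$ convex losses with subgradient selections $g_t$, each $\ell_t$ being $L$-Lipschitz. Then the iterates of lazy gradient descent with constant delay $D\ge0$ and learning rate $\eta>0$ satisfy, for every $T\ge1$, $$\Bigg\|\frac1T\sum_{t=1}^Tg_t(\theta_t)\Bigg\|_2\le\frac{\|\tilde\theta_1\|_2+\|\tilde\theta_{T+1}\|_2}{\eta T}+\frac{DL}{T}.$$
   Context: Lazy gradient descent with constant delay $D\ge0$: starting from $\tilde\theta_1$, for $t=1,2,\dots$ set $\theta_t=\Pi_{C_t}(\tilde\theta_t)$ (Euclidean projection) and $\tilde\theta_{t+1}=\tilde\theta_t-\eta g_{t-D}(\theta_{t-D})$, where $g_s(\theta_s):=\mathbf{0}$ for $s\le0$. $\ell$ is $L$-Lipschitz if all its subgradients $g$ satisfy $\|g(\theta)\|_2\le L$ for all $\theta$. *)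

theory Defs
  imports "HOL-Analysis.Analysis"
begin

end

theory Submission
  imports Defs
begin

text \<open>Unrolling the lazy update gives
  \<open>\<theta>t (T + 1) = \<theta>t 1 - \<eta> (\<Sum>s=1..T - D. g s (\<theta> s))\<close>,
  so the first \<open>T - D\<close> gradients sum to \<open>(\<theta>t 1 - \<theta>t (T + 1)) / \<eta>\<close>, and the at most \<open>D\<close>
  gradients not yet applied add at most \<open>D L\<close> in norm. Neither the projections nor the
  convexity of the losses play any role.\<close>

lemma lazy_delayed_update_unfold:
  fixes x u :: "nat \<Rightarrow> 'a::real_vector"
  assumes upd: "\<And>t. t \<ge> 1 \<Longrightarrow> x (Suc t) = x t - \<eta> *\<^sub>R (if t > D then u (t - D) else 0)"
  shows "x (Suc n) = x 1 - \<eta> *\<^sub>R (\<Sum>s=1..n - D. u s)"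
proof (induction n)
  case 0
  show ?case by simp
next
  case (Suc n)
  have "(\<Sum>s=1..Suc n - D. u s) = (\<Sum>s=1..n - D. u s) + (if Suc n > D then u (Suc n - D) else 0)"
  proof (cases "Suc n > D")
    case True
    then have "Suc n - D = Suc (n - D)" by simp
    with True show ?thesis by simp
  qed simp
  with upd[of "Suc n"] Suc.IH show ?case by (simp add: algebra_simps)
qed

lemma norm_sum_le_norm_sum_prefix:
  fixes u :: "nat \<Rightarrow> 'a::real_normed_vector"
  assumes bound: "\<And>s. s \<ge> 1 \<Longrightarrow> norm (u s) \<le> L"
  shows "norm (\<Sum>s=1..T. u s) \<le> norm (\<Sum>s=1..T - D. u s) + real D * L"
proof -
  have "L \<ge> 0" using bound[of 1] norm_ge_zero[of "u 1"] by linarith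
  have split: "{1..T} = {1..T - D} \<union> {T - D<..T}" by auto
  have "(\<Sum>s=1..T. u s) = (\<Sum>s=1..T - D. u s) + (\<Sum>s\<in>{T - D<..T}. u s)"
    unfolding split by (rule sum.union_disjoint) auto
  moreover have "norm (\<Sum>s\<in>{T - D<..T}. u s) \<le> real D * L"
  proof -
    have "norm (\<Sum>s\<in>{T - D<..T}. u s) \<le> (\<Sum>s\<in>{T - D<..T}. L)"
      by (rule sum_norm_le) (simp add: bound)
    also have "\<dots> = real (T - (T - D)) * L" by simp
    also have "\<dots> \<le> real D * L" using \<open>L \<ge> 0\<close> by (intro mult_right_mono) auto
    finally show ?thesis .
  qed
  ultimately show ?thesis by (metis add_left_mono norm_triangle_le)
qed

theorem proposition11:
  fixes C :: "nat \<Rightarrow> 'a::euclidean_space set"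
    and loss :: "nat \<Rightarrow> 'a \<Rightarrow> real"
    and g :: "nat \<Rightarrow> 'a \<Rightarrow> 'a"
    and \<theta> \<theta>t :: "nat \<Rightarrow> 'a"
    and L \<eta> :: real and D T :: nat
  assumes sets: "\<forall>t\<ge>1. closed (C t) \<and> convex (C t) \<and> C t \<noteq> {}"
    and cvx: "\<forall>t\<ge>1. convex_on UNIV (loss t)"
    and subgrad: "\<forall>t\<ge>1. \<forall>x y. loss t y \<ge> loss t x + g t x \<bullet> (y - x)"
    and lip: "\<forall>t\<ge>1. \<forall>x. norm (g t x) \<le> L"
    and eta: "\<eta> > 0"
    and proj: "\<forall>t\<ge>1. \<theta> t = closest_point (C t) (\<theta>t t)"
    and upd: "\<forall>t\<ge>1. \<theta>t (Suc t) = \<theta>t t - \<eta> *\<^sub>R (if t > D then g (t - D) (\<theta> (t - D)) else 0)"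
    and T: "T \<ge> 1"
  shows "norm ((1 / real T) *\<^sub>R (\<Sum>t=1..T. g t (\<theta> t)))
           \<le> (norm (\<theta>t 1) + norm (\<theta>t (T + 1))) / (\<eta> * real T) + real D * L / real T"
proof -
  let ?u = "\<lambda>s. g s (\<theta> s)"
  have "\<theta>t (Suc T) = \<theta>t 1 - \<eta> *\<^sub>R (\<Sum>s=1..T - D. ?u s)"
    using upd by (intro lazy_delayed_update_unfold) simp
  then have "(\<Sum>s=1..T - D. ?u s) = (1 / \<eta>) *\<^sub>R (\<theta>t 1 - \<theta>t (T + 1))"
    using eta by simp
  then have "norm (\<Sum>s=1..T - D. ?u s) \<le> (norm (\<theta>t 1) + norm (\<theta>t (T + 1))) / \<eta>"
    using eta norm_triangle_ineq4[of "\<theta>t 1" "\<theta>t (T + 1)"] by (simp add: divide_right_mono)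
  moreover have "norm (\<Sum>s=1..T. ?u s) \<le> norm (\<Sum>s=1..T - D. ?u s) + real D * L"
    using lip by (intro norm_sum_le_norm_sum_prefix) simp
  ultimately have "norm (\<Sum>s=1..T. ?u s) / real T
      \<le> ((norm (\<theta>t 1) + norm (\<theta>t (T + 1))) / \<eta> + real D * L) / real T"
    using T by (intro divide_right_mono) auto
  then show ?thesis by (simp add: add_divide_distrib)
qed

end
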